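(* For every $n,k,d\in\mathbb{N}$ with $n\ge k\ge d$ there exists $\varepsilon_n(k,d)>0$ such that $$| \tilde{c}(k,d)| - \varepsilon_n(k,d) \leq \inf_{g\in \mathscr{P}_{>k}^n} \|f_d-g\|_1 \leq | \tilde{c}(k,d)|,$$ and $\lim_{n\to\infty}\varepsilon_n(k,d)=0$ for fixed $k,d$.
   Context: $f_d(x)=\sum_{S\subseteq\{1,\dots,n\},|S|=d}\prod_{i\in S}x_i$ is the $d$-th elementary symmetric multilinear polynomial on $\{-1,1\}^n$. Every $g:\{-1,1\}^n\to\mathbb{R}$ has a unique expansion $g=\sum_S\widehat g(S)w_S$ with $w_S(x)=\prod_{i\in S}x_i$, and $\mathscr{P}^n_{>k}=\{g:\ \widehat g(S)=0\text{ whenever }|S|\le k\}$. $\|\cdot\|_1$ is the $L_1$ norm with respect to the uniform probability measure on $\{-1,1\}^n$. Let $T_k(x)=\sum_{\ell=0}^k c(k,\ell)x^\ell$ be the $k$-th Chebyshev polynomial of the first kind, $T_k(\cos\theta)=\cos(k\theta)$. Define $\tilde c(k,\ell)=c(k,\ell)$ if $k-\ell$ is even and $\tilde c(k,\ell)=c(k-1,\ell)$ if $k-\ell$ is odd. *)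

theory Defs
  imports Complex_Main "HOL-Library.FuncSet" "HOL-Computational_Algebra.Polynomial"
begin

definition cube :: "nat \<Rightarrow> (nat \<Rightarrow> real) set" where
  "cube n = {0..<n} \<rightarrow>\<^sub>E {-1, 1}"

definition walsh :: "nat set \<Rightarrow> (nat \<Rightarrow> real) \<Rightarrow> real" where
  "walsh S x = (\<Prod>i\<in>S. x i)"

definition elem_sym :: "nat \<Rightarrow> nat \<Rightarrow> (nat \<Rightarrow> real) \<Rightarrow> real" where
  "elem_sym n d x = (\<Sum>S\<in>{S. S \<subseteq> {0..<n} \<and> card S = d}. walsh S x)"

text \<open>P^n_{>k}: functions on the cube whose (unique) Walsh expansion has
  vanishing coefficients for all |S| <= k.\<close>
definition high_deg :: "nat \<Rightarrow> nat \<Rightarrow> ((nat \<Rightarrow> real) \<Rightarrow> real) set" where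
  "high_deg n k = {g. \<exists>c :: nat set \<Rightarrow> real. (\<forall>S. card S \<le> k \<longrightarrow> c S = 0) \<and>
      (\<forall>x\<in>cube n. g x = (\<Sum>S\<in>Pow {0..<n}. c S * walsh S x))}"

definition L1_cube :: "nat \<Rightarrow> ((nat \<Rightarrow> real) \<Rightarrow> real) \<Rightarrow> real" where
  "L1_cube n h = (\<Sum>x\<in>cube n. \<bar>h x\<bar>) / 2 ^ n"

fun cheb :: "nat \<Rightarrow> real poly" where
  "cheb 0 = 1"
| "cheb (Suc 0) = [:0, 1:]"
| "cheb (Suc (Suc k)) = [:0, 2:] * cheb (Suc k) - cheb k"

definition cheb_coeff :: "nat \<Rightarrow> nat \<Rightarrow> real" where
  "cheb_coeff k l = coeff (cheb k) l"

definition cheb_coeff_tilde :: "nat \<Rightarrow> nat \<Rightarrow> real" where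
  "cheb_coeff_tilde k l = (if even (k - l) then cheb_coeff k l else cheb_coeff (k - 1) l)"

end

theory Submission
  imports Defs
begin

(* Let K be k or k - 1, whichever has the parity of d, so that the tilde coefficient is c(K,d).

   Lower bound: if h has degree at most k and |h| <= 1 on the cube, then E[f_d h] <= ||f_d - g||_1
   for every g in P_{>k}. Take h = +-T_K(y), where y is the mean of the coordinates. The recursion
   (sum_i x_i) f_d = (d+1) f_{d+1} + (n-d+1) f_{d-1} shows that E[f_d y^m] tends to [m = d] as n
   grows, so E[f_d h] tends to |c(K,d)|.

   Upper bound: let mu be a signed measure on [-1,1] with int t^l dmu = [l = d] for l <= k. Then
   f_d - int prod_i (1 + t x_i) dmu(t) lies in P_{>k}, and each Riesz product prod_i (1 + t x_i)
   is nonnegative with mean 1, so the distance is at most the total variation of mu. Such a mu with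
   total variation |c(K,d)| is obtained from Lagrange interpolation of T_K at its extremal points
   cos(j pi / K), where T_K = +-1 alternately and the interpolation weights alternate in sign. *)

section \<open>Walsh characters on the cube\<close>

lemma cube_coord: "x \<in> cube n \<Longrightarrow> i < n \<Longrightarrow> x i = -1 \<or> x i = 1"
  by (auto simp: cube_def PiE_def Pi_def)

lemma sum_cube_prod:
  fixes f :: "nat \<Rightarrow> real \<Rightarrow> real"
  shows "(\<Sum>x\<in>cube n. \<Prod>i<n. f i (x i)) = (\<Prod>i<n. f i (-1) + f i 1)"
  using prod_sum_PiE[of "{0..<n}" "\<lambda>_. {-1, 1::real}" f]
  by (simp add: cube_def lessThan_atLeast0)

lemma sum_walsh:
  assumes "S \<subseteq> {0..<n}"
  shows "(\<Sum>x\<in>cube n. walsh S x) = (if S = {} then 2 ^ n else 0)"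
proof -
  define f where "f i a = (if i \<in> S then a else (1::real))" for i a
  have "walsh S x = (\<Prod>i<n. f i (x i))" for x
    using assms by (simp add: walsh_def f_def prod.If_cases lessThan_atLeast0 Int_absorb1)
  then have "(\<Sum>x\<in>cube n. walsh S x) = (\<Prod>i<n. f i (-1) + f i 1)"
    by (simp add: sum_cube_prod)
  also have "\<dots> = (\<Prod>i<n. if i \<in> S then 0 else 2)"
    by (intro prod.cong) (auto simp: f_def)
  also have "\<dots> = (if S = {} then 2 ^ n else 0)"
    using assms by (auto intro: prod_zero)
  finally show ?thesis .
qed

lemma coord_mult_walsh_mem:
  assumes "x \<in> cube n" "S \<subseteq> {0..<n}" "i \<in> S"
  shows "x i * walsh S x = walsh (S - {i}) x"
proof -
  have "finite S"
    using assms(2) finite_subset by blast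
  then have "walsh S x = x i * walsh (S - {i}) x"
    unfolding walsh_def using assms(3) by (simp add: prod.remove)
  moreover have "x i * x i = 1"
    using cube_coord[OF assms(1), of i] assms(2,3) by force
  ultimately show ?thesis
    by (metis mult.assoc mult_1)
qed

lemma coord_mult_walsh_not_mem:
  "finite S \<Longrightarrow> i \<notin> S \<Longrightarrow> x i * walsh S x = walsh (insert i S) x"
  by (simp add: walsh_def)

section \<open>Elementary symmetric polynomials times the coordinate sum\<close>

definition slice :: "nat \<Rightarrow> nat \<Rightarrow> nat set set" where
  "slice n j = {S. S \<subseteq> {0..<n} \<and> card S = j}"

lemma finite_slice [simp]: "finite (slice n j)"
  unfolding slice_def by (rule finite_subset[of _ "Pow {0..<n}"]) auto

lemma slice_0: "slice n 0 = {{}}"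
  by (auto simp: slice_def finite_subset)

lemma elem_sym_eq_sum_slice: "elem_sym n j x = (\<Sum>S\<in>slice n j. walsh S x)"
  by (simp add: elem_sym_def slice_def)

lemma sum_slice_insert:
  "(\<Sum>S\<in>slice n j. \<Sum>i\<in>{0..<n} - S. F (insert i S) (S::nat set)) =
   (\<Sum>U\<in>slice n (Suc j). \<Sum>i\<in>U. F U (U - {i}))"
proof -
  have "(\<Sum>S\<in>slice n j. \<Sum>i\<in>{0..<n} - S. F (insert i S) S) =
        (\<Sum>(S, i)\<in>(SIGMA S:slice n j. {0..<n} - S). F (insert i S) S)"
    by (rule sum.Sigma) auto
  also have "\<dots> = (\<Sum>(U, i)\<in>(SIGMA U:slice n (Suc j). U). F U (U - {i}))"
  proof (rule sum.reindex_bij_witness[where i = "\<lambda>(U, i). (U - {i}, i)"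
        and j = "\<lambda>(S, i). (insert i S, i)"])
    fix a assume "a \<in> (SIGMA S:slice n j. {0..<n} - S)"
    then obtain S i where a: "a = (S, i)" "S \<subseteq> {0..<n}" "card S = j" "i < n" "i \<notin> S"
      by (auto simp: slice_def)
    moreover have "finite S"
      using a(2) finite_subset by blast
    ultimately show "(\<lambda>(U, i). (U - {i}, i)) ((\<lambda>(S, i). (insert i S, i)) a) = a"
      "(\<lambda>(S, i). (insert i S, i)) a \<in> (SIGMA U:slice n (Suc j). U)"
      "(case (\<lambda>(S, i). (insert i S, i)) a of (U, i) \<Rightarrow> F U (U - {i})) =
       (case a of (S, i) \<Rightarrow> F (insert i S) S)"
      by (auto simp: slice_def)
  next
    fix b assume "b \<in> (SIGMA U:slice n (Suc j). U)"
    then obtain U i where b: "b = (U, i)" "U \<subseteq> {0..<n}" "card U = Suc j" "i \<in> U"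
      by (auto simp: slice_def)
    moreover have "finite U"
      using b(2) finite_subset by blast
    ultimately show "(\<lambda>(S, i). (insert i S, i)) ((\<lambda>(U, i). (U - {i}, i)) b) = b"
      "(\<lambda>(U, i). (U - {i}, i)) b \<in> (SIGMA S:slice n j. {0..<n} - S)"
      by (auto simp: slice_def insert_absorb)
  qed
  also have "\<dots> = (\<Sum>U\<in>slice n (Suc j). \<Sum>i\<in>U. F U (U - {i}))"
    by (rule sum.Sigma[symmetric]) (auto simp: slice_def intro: finite_subset)
  finally show ?thesis .
qed

lemma sum_coords_mult_walsh:
  assumes "x \<in> cube n" "S \<subseteq> {0..<n}"
  shows "(\<Sum>i<n. x i) * walsh S x =
    (\<Sum>i\<in>S. walsh (S - {i}) x) + (\<Sum>i\<in>{0..<n} - S. walsh (insert i S) x)"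
proof -
  have "finite S"
    using assms(2) finite_subset by blast
  have "(\<Sum>i<n. x i) * walsh S x = (\<Sum>i\<in>{0..<n}. x i * walsh S x)"
    by (simp add: sum_distrib_right lessThan_atLeast0)
  also have "\<dots> = (\<Sum>i\<in>{0..<n} - S. x i * walsh S x) + (\<Sum>i\<in>S. x i * walsh S x)"
    by (rule sum.subset_diff[OF assms(2)]) simp
  also have "\<dots> = (\<Sum>i\<in>S. walsh (S - {i}) x) + (\<Sum>i\<in>{0..<n} - S. walsh (insert i S) x)"
    using assms \<open>finite S\<close> by (simp add: coord_mult_walsh_mem coord_mult_walsh_not_mem)
  finally show ?thesis .
qed

lemma sum_slice_insert_walsh:
  "(\<Sum>S\<in>slice n j. \<Sum>i\<in>{0..<n} - S. walsh (insert i S) x) = real (Suc j) * elem_sym n (Suc j) x"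
proof -
  have "(\<Sum>S\<in>slice n j. \<Sum>i\<in>{0..<n} - S. walsh (insert i S) x) =
        (\<Sum>U\<in>slice n (Suc j). real (Suc j) * walsh U x)"
    unfolding sum_slice_insert[where F = "\<lambda>U S. walsh U x"]
    by (rule sum.cong) (auto simp: slice_def)
  then show ?thesis
    by (simp add: elem_sym_eq_sum_slice sum_distrib_left)
qed

lemma sum_slice_remove_walsh:
  "(\<Sum>U\<in>slice n (Suc j). \<Sum>i\<in>U. walsh (U - {i}) x) = real (n - j) * elem_sym n j x"
proof -
  have "(\<Sum>U\<in>slice n (Suc j). \<Sum>i\<in>U. walsh (U - {i}) x) =
        (\<Sum>S\<in>slice n j. real (n - j) * walsh S x)"
    unfolding sum_slice_insert[where F = "\<lambda>U S. walsh S x", symmetric]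
    by (rule sum.cong) (auto simp: slice_def card_Diff_subset finite_subset)
  then show ?thesis
    by (simp add: elem_sym_eq_sum_slice sum_distrib_left)
qed

lemma sum_coords_mult_elem_sym_0:
  "x \<in> cube n \<Longrightarrow> (\<Sum>i<n. x i) * elem_sym n 0 x = elem_sym n 1 x"
  using sum_coords_mult_walsh[where S = "{}"] sum_slice_insert_walsh[where j = 0]
  by (simp add: elem_sym_eq_sum_slice slice_0)

lemma sum_coords_mult_elem_sym_Suc:
  assumes "x \<in> cube n"
  shows "(\<Sum>i<n. x i) * elem_sym n (Suc j) x =
    real (Suc (Suc j)) * elem_sym n (Suc (Suc j)) x + real (n - j) * elem_sym n j x"
proof -
  have "(\<Sum>i<n. x i) * elem_sym n (Suc j) x =
    (\<Sum>S\<in>slice n (Suc j). (\<Sum>i\<in>S. walsh (S - {i}) x) + (\<Sum>i\<in>{0..<n} - S. walsh (insert i S) x))"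
    unfolding elem_sym_eq_sum_slice sum_distrib_left
    by (rule sum.cong) (auto simp: slice_def intro!: sum_coords_mult_walsh[OF assms])
  then show ?thesis
    by (simp add: sum.distrib sum_slice_remove_walsh sum_slice_insert_walsh)
qed

section \<open>Moments of the coordinate mean\<close>

definition coord_mean :: "nat \<Rightarrow> (nat \<Rightarrow> real) \<Rightarrow> real" where
  "coord_mean n x = (\<Sum>i<n. x i) / real n"

(* E[f_j y^m] for the coordinate mean y, see sum_elem_sym_mult_coord_mean_power. *)
fun mean_moment :: "nat \<Rightarrow> nat \<Rightarrow> nat \<Rightarrow> real" where
  "mean_moment n 0 j = (if j = 0 then 1 else 0)"
| "mean_moment n (Suc m) 0 = mean_moment n m 1 / real n"
| "mean_moment n (Suc m) (Suc j) =
    (real (Suc (Suc j)) * mean_moment n m (Suc (Suc j)) + real (n - j) * mean_moment n m j) / real n"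

lemma abs_coord_mean_le_1:
  assumes "x \<in> cube n"
  shows "\<bar>coord_mean n x\<bar> \<le> 1"
proof -
  have "\<bar>\<Sum>i<n. x i\<bar> \<le> (\<Sum>i<n. \<bar>x i\<bar>)"
    by (rule sum_abs)
  also have "\<dots> = (\<Sum>i<n. 1)"
    using cube_coord[OF assms] by (intro sum.cong) force+
  finally show ?thesis
    by (cases "n = 0") (simp_all add: coord_mean_def abs_divide divide_le_eq_1)
qed

lemma sum_elem_sym: "(\<Sum>x\<in>cube n. elem_sym n j x) = (if j = 0 then 2 ^ n else 0)"
proof -
  have "(\<Sum>x\<in>cube n. elem_sym n j x) = (\<Sum>S\<in>slice n j. \<Sum>x\<in>cube n. walsh S x)"
    by (simp add: elem_sym_eq_sum_slice sum.swap[of _ "cube n"])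
  also have "\<dots> = (\<Sum>S\<in>slice n j. if S = {} then 2 ^ n else 0)"
    by (intro sum.cong) (simp_all add: slice_def sum_walsh)
  also have "\<dots> = (if j = 0 then 2 ^ n else 0)"
    by (auto simp: slice_0 slice_def)
  finally show ?thesis .
qed

lemma sum_elem_sym_mult_coord_mean_power:
  "(\<Sum>x\<in>cube n. elem_sym n j x * coord_mean n x ^ m) = 2 ^ n * mean_moment n m j"
proof (induction m arbitrary: j)
  case 0
  then show ?case
    by (simp add: sum_elem_sym)
next
  case (Suc m)
  have step: "(\<Sum>x\<in>cube n. elem_sym n j x * coord_mean n x ^ Suc m) =
    (\<Sum>x\<in>cube n. ((\<Sum>i<n. x i) * elem_sym n j x) * coord_mean n x ^ m) / real n" for j
    unfolding sum_divide_distrib by (intro sum.cong) (simp_all add: coord_mean_def field_simps)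
  show ?case
  proof (cases j)
    case 0
    then show ?thesis
      unfolding step by (simp add: sum_coords_mult_elem_sym_0 Suc.IH cong: sum.cong)
  next
    case (Suc j')
    then show ?thesis
      unfolding step by (simp add: sum_coords_mult_elem_sym_Suc distrib_right sum.distrib
          sum_distrib_left[symmetric] mult.assoc Suc.IH add_divide_distrib cong: sum.cong)
        (simp add: algebra_simps)
  qed
qed

lemma real_diff_div_tendsto_1: "(\<lambda>n. real (n - j) / real n) \<longlonglongrightarrow> 1"
proof -
  have "(\<lambda>n. 1 - real j * (1 / real n)) \<longlonglongrightarrow> 1 - real j * 0"
    by (intro tendsto_intros)
  moreover have "\<forall>\<^sub>F n in sequentially. 1 - real j * (1 / real n) = real (n - j) / real n"
    using eventually_ge_at_top[of "Suc j"]
    by eventually_elim (simp add: of_nat_diff diff_divide_distrib)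
  ultimately show ?thesis
    using tendsto_cong by fastforce
qed

lemma mean_moment_tendsto: "(\<lambda>n. mean_moment n m j) \<longlonglongrightarrow> (if m = j then 1 else 0)"
proof (induction m arbitrary: j)
  case 0
  then show ?case
    by simp
next
  case (Suc m)
  show ?case
  proof (cases j)
    case 0
    have "(\<lambda>n. mean_moment n m 1 * (1 / real n)) \<longlonglongrightarrow> (if m = 1 then 1 else 0) * 0"
      by (intro tendsto_mult Suc.IH lim_1_over_n)
    then show ?thesis
      using 0 by simp
  next
    case (Suc j')
    have "(\<lambda>n. real (Suc (Suc j')) * mean_moment n m (Suc (Suc j')) * (1 / real n)
        + real (n - j') / real n * mean_moment n m j')
      \<longlonglongrightarrow> real (Suc (Suc j')) * (if m = Suc (Suc j') then 1 else 0) * 0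
        + 1 * (if m = j' then 1 else 0)"
      by (intro tendsto_intros Suc.IH lim_1_over_n real_diff_div_tendsto_1)
    then show ?thesis
      using Suc by (simp add: add_divide_distrib)
  qed
qed

section \<open>Chebyshev polynomials\<close>

lemma poly_cheb_cos: "poly (cheb k) (cos x) = cos (real k * x)"
proof (induction k rule: cheb.induct)
  case (3 k)
  have "cos (real (Suc (Suc k)) * x) = 2 * cos x * cos (real (Suc k) * x) - cos (real k * x)"
    using cos_times_cos[of x "real (Suc k) * x"] by (simp add: algebra_simps)
  then show ?case
    using 3 by simp
qed simp_all

lemma abs_poly_cheb_le_1:
  assumes "\<bar>t\<bar> \<le> 1"
  shows "\<bar>poly (cheb k) t\<bar> \<le> 1"
proof -
  have "t = cos (arccos t)"
    using assms by simp
  then show ?thesis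
    by (metis poly_cheb_cos abs_cos_le_one)
qed

lemma coeff_cheb_Suc_Suc:
  "coeff (cheb (Suc (Suc k))) m =
    (case m of 0 \<Rightarrow> 0 | Suc m' \<Rightarrow> 2 * coeff (cheb (Suc k)) m') - coeff (cheb k) m"
  by (simp add: coeff_pCons split: nat.split)

lemma coeff_cheb_eq_0: "k < m \<or> odd (k + m) \<Longrightarrow> coeff (cheb k) m = 0"
proof (induction k arbitrary: m rule: cheb.induct)
  case 1
  then show ?case
    by (cases m) auto
next
  case 2
  then show ?case
    by (auto simp: coeff_pCons split: nat.split)
next
  case (3 k)
  show ?case
  proof (cases m)
    case 0
    then show ?thesis
      using "3.IH"(2)[of 0] "3.prems" by (simp add: coeff_cheb_Suc_Suc)
  next
    case (Suc m')
    then show ?thesis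
      using "3.IH"(1)[of m'] "3.IH"(2)[of m] "3.prems" by (auto simp: coeff_cheb_Suc_Suc)
  qed
qed

lemma degree_cheb_le: "degree (cheb k) \<le> k"
  using coeff_cheb_eq_0 by (intro degree_le) auto

lemma poly_cheb_eq_sum: "poly (cheb k) t = (\<Sum>m\<le>k. cheb_coeff k m * t ^ m)"
  unfolding poly_altdef cheb_coeff_def
  by (rule sum.mono_neutral_left) (auto simp: degree_cheb_le coeff_eq_0)

section \<open>The lower bound\<close>

definition low_degree :: "nat \<Rightarrow> nat \<Rightarrow> ((nat \<Rightarrow> real) \<Rightarrow> real) \<Rightarrow> bool" where
  "low_degree n k h \<longleftrightarrow>
    (\<forall>S. S \<subseteq> {0..<n} \<longrightarrow> k < card S \<longrightarrow> (\<Sum>x\<in>cube n. walsh S x * h x) = 0)"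

lemma low_degree_const: "low_degree n k (\<lambda>_. c)"
  unfolding low_degree_def by (auto simp: sum_distrib_right[symmetric] sum_walsh)

lemma low_degree_mono: "low_degree n k h \<Longrightarrow> k \<le> k' \<Longrightarrow> low_degree n k' h"
  unfolding low_degree_def by auto

lemma low_degree_sum:
  "finite I \<Longrightarrow> (\<And>i. i \<in> I \<Longrightarrow> low_degree n k (h i)) \<Longrightarrow> low_degree n k (\<lambda>x. \<Sum>i\<in>I. h i x)"
  unfolding low_degree_def sum_distrib_left by (subst sum.swap) simp

lemma low_degree_cmult: "low_degree n k h \<Longrightarrow> low_degree n k (\<lambda>x. c * h x)"
  unfolding low_degree_def by (simp add: sum_distrib_left[symmetric] mult.left_commute)

lemma low_degree_coord_mult:
  assumes "i < n" "low_degree n k h"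
  shows "low_degree n (Suc k) (\<lambda>x. x i * h x)"
  unfolding low_degree_def
proof (intro allI impI)
  fix S assume S: "S \<subseteq> {0..<n}" "Suc k < card S"
  define S' where "S' = (if i \<in> S then S - {i} else insert i S)"
  have "finite S"
    using S finite_subset by blast
  then have S': "S' \<subseteq> {0..<n}" "k < card S'"
    using S assms(1) by (auto simp: S'_def)
  have "(\<Sum>x\<in>cube n. walsh S x * (x i * h x)) = (\<Sum>x\<in>cube n. walsh S' x * h x)"
  proof (rule sum.cong)
    fix x assume "x \<in> cube n"
    then have "x i * walsh S x = walsh S' x"
      using coord_mult_walsh_mem[OF _ S(1)] coord_mult_walsh_not_mem[OF \<open>finite S\<close>]
      by (auto simp: S'_def)
    then show "walsh S x * (x i * h x) = walsh S' x * h x"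
      by (metis mult.assoc mult.commute)
  qed simp
  also have "\<dots> = 0"
    using assms(2) S' unfolding low_degree_def by blast
  finally show "(\<Sum>x\<in>cube n. walsh S x * (x i * h x)) = 0" .
qed

lemma low_degree_coord_mean_mult:
  assumes "low_degree n k h"
  shows "low_degree n (Suc k) (\<lambda>x. coord_mean n x * h x)"
proof -
  have "low_degree n (Suc k) (\<lambda>x. (1 / real n) * (\<Sum>i<n. x i * h x))"
    by (intro low_degree_cmult low_degree_sum low_degree_coord_mult assms) auto
  then show ?thesis
    by (simp add: coord_mean_def sum_distrib_right)
qed

lemma low_degree_coord_mean_power: "low_degree n m (\<lambda>x. coord_mean n x ^ m)"
  by (induction m) (simp_all add: low_degree_const low_degree_coord_mean_mult)

lemma abs_correlation_le_L1_dist: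
  assumes g: "g \<in> high_deg n k" and h: "low_degree n k h" and h_le: "\<And>x. x \<in> cube n \<Longrightarrow> \<bar>h x\<bar> \<le> 1"
  shows "\<bar>\<Sum>x\<in>cube n. f x * h x\<bar> / 2 ^ n \<le> L1_cube n (\<lambda>x. f x - g x)"
proof -
  obtain c where c: "\<And>S. card S \<le> k \<Longrightarrow> c S = 0"
    "\<And>x. x \<in> cube n \<Longrightarrow> g x = (\<Sum>S\<in>Pow {0..<n}. c S * walsh S x)"
    using g unfolding high_deg_def by blast
  have "(\<Sum>x\<in>cube n. g x * h x) = (\<Sum>S\<in>Pow {0..<n}. c S * (\<Sum>x\<in>cube n. walsh S x * h x))"
    by (simp add: c(2) sum_distrib_left sum_distrib_right sum.swap[of _ "cube n"] mult.assoc
        cong: sum.cong)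
  also have "\<dots> = 0"
  proof (intro sum.neutral ballI)
    fix S assume "S \<in> Pow {0..<n}"
    then show "c S * (\<Sum>x\<in>cube n. walsh S x * h x) = 0"
      using c(1) h unfolding low_degree_def by (cases "card S \<le> k") auto
  qed
  finally have "(\<Sum>x\<in>cube n. f x * h x) = (\<Sum>x\<in>cube n. (f x - g x) * h x)"
    by (simp add: left_diff_distrib sum_subtractf)
  also have "\<bar>\<dots>\<bar> \<le> (\<Sum>x\<in>cube n. \<bar>f x - g x\<bar>)"
    using h_le by (intro order.trans[OF sum_abs] sum_mono) (simp add: abs_mult mult_left_le)
  finally show ?thesis
    unfolding L1_cube_def by (simp add: divide_right_mono)
qed

definition cheb_mean_corr :: "nat \<Rightarrow> nat \<Rightarrow> nat \<Rightarrow> real" where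
  "cheb_mean_corr n K d = (\<Sum>m\<le>K. cheb_coeff K m * mean_moment n m d)"

lemma low_degree_cheb_coord_mean:
  "K \<le> k \<Longrightarrow> low_degree n k (\<lambda>x. poly (cheb K) (coord_mean n x))"
  unfolding poly_cheb_eq_sum
  by (intro low_degree_sum low_degree_cmult) (auto intro: low_degree_mono[OF low_degree_coord_mean_power])

lemma sum_elem_sym_mult_cheb_coord_mean:
  "(\<Sum>x\<in>cube n. elem_sym n d x * poly (cheb K) (coord_mean n x)) = 2 ^ n * cheb_mean_corr n K d"
proof -
  have "(\<Sum>x\<in>cube n. elem_sym n d x * poly (cheb K) (coord_mean n x)) =
    (\<Sum>m\<le>K. cheb_coeff K m * (\<Sum>x\<in>cube n. elem_sym n d x * coord_mean n x ^ m))"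
    unfolding poly_cheb_eq_sum sum_distrib_left by (subst sum.swap) (simp add: mult_ac)
  then show ?thesis
    by (simp add: sum_elem_sym_mult_coord_mean_power cheb_mean_corr_def sum_distrib_left mult_ac)
qed

lemma L1_cube_nonneg: "L1_cube n h \<ge> 0"
  unfolding L1_cube_def by (simp add: sum_nonneg)

lemma zero_in_high_deg: "(\<lambda>_. 0) \<in> high_deg n k"
  unfolding high_deg_def by auto

lemma abs_cheb_mean_corr_le_INF_L1_dist:
  assumes "K \<le> k"
  shows "\<bar>cheb_mean_corr n K d\<bar> \<le> (INF g\<in>high_deg n k. L1_cube n (\<lambda>x. elem_sym n d x - g x))"
proof (rule cINF_greatest)
  show "high_deg n k \<noteq> {}"
    using zero_in_high_deg by blast
  fix g assume "g \<in> high_deg n k"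
  from abs_correlation_le_L1_dist[OF this low_degree_cheb_coord_mean[OF assms], of "elem_sym n d"]
  show "\<bar>cheb_mean_corr n K d\<bar> \<le> L1_cube n (\<lambda>x. elem_sym n d x - g x)"
    by (simp add: sum_elem_sym_mult_cheb_coord_mean abs_mult abs_coord_mean_le_1 abs_poly_cheb_le_1)
qed

lemma cheb_mean_corr_tendsto:
  assumes "d \<le> K"
  shows "(\<lambda>n. cheb_mean_corr n K d) \<longlonglongrightarrow> cheb_coeff K d"
proof -
  have "(\<lambda>n. cheb_mean_corr n K d) \<longlonglongrightarrow> (\<Sum>m\<le>K. cheb_coeff K m * (if m = d then 1 else 0))"
    unfolding cheb_mean_corr_def by (intro tendsto_sum tendsto_mult_left mean_moment_tendsto)
  then show ?thesis
    using assms by (simp add: if_distrib cong: if_cong)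
qed

section \<open>Lagrange interpolation at descending nodes\<close>

lemma coeff_prod_nonneg:
  fixes p :: "'i \<Rightarrow> 'a::linordered_idom poly"
  assumes "\<And>i e. i \<in> I \<Longrightarrow> coeff (p i) e \<ge> 0"
  shows "coeff (prod p I) e \<ge> 0"
  using assms
proof (induction I arbitrary: e rule: infinite_finite_induct)
  case (insert i I)
  then show ?case
    by (simp add: coeff_mult sum_nonneg)
qed (simp_all add: coeff_1)

lemma coeff_prod_linear_sign:
  fixes a :: "'i \<Rightarrow> real"
  assumes "finite I" "\<And>i. i \<in> I \<Longrightarrow> a i \<ge> 0"
  shows "(-1) ^ (card I + e) * coeff (\<Prod>i\<in>I. [:- a i, 1:]) e \<ge> 0"
proof -
  have "pcompose (\<Prod>i\<in>I. [:- a i, 1:]) [:0, -1:] = (\<Prod>i\<in>I. smult (-1) [:a i, 1:])"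
    by (simp add: pcompose_prod pcompose_pCons)
  also have "\<dots> = smult ((-1) ^ card I) (\<Prod>i\<in>I. [:a i, 1:])"
    by (simp only: prod_smult prod_constant)
  finally have "(-1) ^ e * coeff (\<Prod>i\<in>I. [:- a i, 1:]) e = (-1) ^ card I * coeff (\<Prod>i\<in>I. [:a i, 1:]) e"
    by (metis coeff_pcompose_linear coeff_smult)
  moreover have "coeff (\<Prod>i\<in>I. [:a i, 1:]) e \<ge> 0"
    using assms(2) by (intro coeff_prod_nonneg) (simp add: coeff_pCons split: nat.split)
  ultimately show ?thesis
    by (simp add: power_add mult.assoc)
qed

definition lagrange_basis :: "nat \<Rightarrow> (nat \<Rightarrow> real) \<Rightarrow> nat \<Rightarrow> real poly" where
  "lagrange_basis M u j =
    smult (1 / (\<Prod>i\<in>{..M} - {j}. u j - u i)) (\<Prod>i\<in>{..M} - {j}. [:- u i, 1:])"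

locale descending_nodes =
  fixes M :: nat and u :: "nat \<Rightarrow> real"
  assumes descending: "\<And>i j. i < j \<Longrightarrow> j \<le> M \<Longrightarrow> u j < u i"
begin

lemma inj_on_nodes: "inj_on u {..M}"
  by (rule inj_onI) (metis atMost_iff descending less_irrefl linorder_neqE_nat)

lemma lagrange_denominator_sign:
  assumes "j \<le> M"
  shows "(-1) ^ j * (\<Prod>i\<in>{..M} - {j}. u j - u i) > 0"
proof -
  have split: "{..M} - {j} = {..<j} \<union> {j<..M}"
    using assms by auto
  have "(\<Prod>i\<in>{..M} - {j}. u j - u i) = (\<Prod>i<j. u j - u i) * (\<Prod>i\<in>{j<..M}. u j - u i)"
    unfolding split by (rule prod.union_disjoint) auto
  also have "(\<Prod>i<j. u j - u i) = (-1) ^ j * (\<Prod>i<j. u i - u j)"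
    using prod_uminus[of "\<lambda>i. u i - u j" "{..<j}"] by simp
  finally have "(-1) ^ j * (\<Prod>i\<in>{..M} - {j}. u j - u i) =
      (\<Prod>i<j. u i - u j) * (\<Prod>i\<in>{j<..M}. u j - u i)"
    by (simp add: mult.assoc[symmetric] power_mult_distrib[symmetric])
  also have "\<dots> > 0"
    using assms by (intro mult_pos_pos prod_pos) (auto intro: descending)
  finally show ?thesis .
qed

lemma poly_lagrange_basis:
  assumes "i \<le> M" "j \<le> M"
  shows "poly (lagrange_basis M u j) (u i) = (if i = j then 1 else 0)"
proof (cases "i = j")
  case True
  have "(\<Prod>l\<in>{..M} - {j}. u j - u l) \<noteq> 0"
    using lagrange_denominator_sign[OF assms(2)] by fastforce
  then show ?thesis
    by (simp add: True lagrange_basis_def poly_prod)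
next
  case False
  then have "(\<Prod>l\<in>{..M} - {j}. u i - u l) = 0"
    using assms by (intro prod_zero) auto
  then show ?thesis
    using False by (simp add: lagrange_basis_def poly_prod)
qed

lemma degree_lagrange_basis: "j \<le> M \<Longrightarrow> degree (lagrange_basis M u j) \<le> M"
  unfolding lagrange_basis_def
  by (rule order.trans[OF degree_smult_le order.trans[OF degree_prod_sum_le]]) simp_all

lemma lagrange_interpolation:
  assumes "degree R \<le> M"
  shows "R = (\<Sum>j\<le>M. smult (poly R (u j)) (lagrange_basis M u j))"
proof (rule poly_eqI_degree[where A = "u ` {..M}"])
  fix x assume "x \<in> u ` {..M}"
  then obtain i where "i \<le> M" "x = u i"
    by auto
  then show "poly R x = poly (\<Sum>j\<le>M. smult (poly R (u j)) (lagrange_basis M u j)) x"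
    by (simp add: poly_sum poly_lagrange_basis if_distrib cong: if_cong)
next
  have card: "card (u ` {..M}) = Suc M"
    using inj_on_nodes by (simp add: card_image)
  then show "degree R < card (u ` {..M})"
    using assms by simp
  have "degree (\<Sum>j\<le>M. smult (poly R (u j)) (lagrange_basis M u j)) \<le> M"
    by (intro degree_sum_le order.trans[OF degree_smult_le] degree_lagrange_basis) auto
  then show "degree (\<Sum>j\<le>M. smult (poly R (u j)) (lagrange_basis M u j)) < card (u ` {..M})"
    using card by simp
qed

lemma coeff_lagrange_interpolation:
  "degree R \<le> M \<Longrightarrow> coeff R e = (\<Sum>j\<le>M. poly R (u j) * coeff (lagrange_basis M u j) e)"
  by (subst lagrange_interpolation) (simp_all add: coeff_sum)

lemma coeff_lagrange_basis_sign:
  assumes "j \<le> M" and nonneg: "\<And>i. i \<le> M \<Longrightarrow> u i \<ge> 0"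
  shows "(-1) ^ (M + e + j) * coeff (lagrange_basis M u j) e \<ge> 0"
proof -
  have "(-1) ^ (M + e) * coeff (\<Prod>i\<in>{..M} - {j}. [:- u i, 1:]) e \<ge> 0"
    using coeff_prod_linear_sign[of "{..M} - {j}" u e] nonneg assms(1) by simp
  moreover have "(-1) ^ j / (\<Prod>i\<in>{..M} - {j}. u j - u i) > 0"
    using lagrange_denominator_sign[OF assms(1)] by (simp add: zero_less_divide_iff zero_less_mult_iff)
  ultimately have "0 \<le> ((-1) ^ (M + e) * coeff (\<Prod>i\<in>{..M} - {j}. [:- u i, 1:]) e) *
      ((-1) ^ j / (\<Prod>i\<in>{..M} - {j}. u j - u i))"
    by (rule mult_nonneg_nonneg[OF _ less_imp_le])
  then show ?thesis
    by (simp add: lagrange_basis_def power_add mult_ac)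
qed

end

section \<open>A signed measure with the moments of a Chebyshev coefficient\<close>

definition cheb_node :: "nat \<Rightarrow> nat \<Rightarrow> real" where
  "cheb_node K j = cos (real j * pi / real K)"

lemma cheb_angle_le_iff: "0 < K \<Longrightarrow> real j * pi / real K \<le> pi / 2 \<longleftrightarrow> 2 * j \<le> K"
  by (simp add: field_simps) linarith

lemma cheb_angle_less_iff: "0 < K \<Longrightarrow> real j * pi / real K < pi / 2 \<longleftrightarrow> 2 * j < K"
  by (simp add: field_simps) linarith

lemma cheb_node_nonneg:
  assumes "2 * j \<le> K"
  shows "cheb_node K j \<ge> 0"
proof (cases "K = 0")
  case False
  then have "real j * pi / real K \<le> pi / 2"
    using assms cheb_angle_le_iff by simp
  moreover have "0 \<le> real j * pi / real K"
    by simp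
  ultimately show ?thesis
    unfolding cheb_node_def using pi_gt_zero by (intro cos_ge_zero) linarith+
qed (simp add: cheb_node_def)

lemma cheb_node_pos:
  assumes "2 * j < K"
  shows "cheb_node K j > 0"
proof -
  have "real j * pi / real K < pi / 2"
    using assms cheb_angle_less_iff by simp
  moreover have "0 \<le> real j * pi / real K"
    by simp
  ultimately show ?thesis
    unfolding cheb_node_def using pi_gt_zero by (intro cos_gt_zero_pi) linarith+
qed

lemma cheb_node_strict_decreasing:
  assumes "i < j" "2 * j \<le> K"
  shows "cheb_node K j < cheb_node K i"
proof -
  have "real i * pi / real K < real j * pi / real K"
    using assms by (intro divide_strict_right_mono mult_strict_right_mono) auto
  moreover have "real j * pi / real K \<le> pi / 2"
    using assms cheb_angle_le_iff[of K j] by simp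
  moreover have "0 \<le> real i * pi / real K"
    by simp
  ultimately show ?thesis
    unfolding cheb_node_def using pi_gt_zero by (intro cos_monotone_0_pi) linarith+
qed

lemma poly_cheb_node: "j \<le> K \<Longrightarrow> poly (cheb K) (cheb_node K j) = (-1) ^ j"
  by (cases "K = 0") (simp_all add: cheb_node_def poly_cheb_cos)

lemma descending_nodes_cheb_node_sq: "descending_nodes (K div 2) (\<lambda>j. cheb_node K j ^ 2)"
proof
  fix i j assume "i < j" "j \<le> K div 2"
  then show "cheb_node K j ^ 2 < cheb_node K i ^ 2"
    using cheb_node_strict_decreasing[of i j K] cheb_node_nonneg[of j K]
    by (intro power_strict_mono) auto
qed

definition cheb_sq :: "nat \<Rightarrow> real poly" where
  "cheb_sq K = (\<Sum>i\<le>K div 2. monom (cheb_coeff K (2 * i + K mod 2)) i)"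

lemma degree_cheb_sq: "degree (cheb_sq K) \<le> K div 2"
  unfolding cheb_sq_def by (intro degree_sum_le) (auto intro: order.trans[OF degree_monom_le])

lemma coeff_cheb_sq: "e \<le> K div 2 \<Longrightarrow> coeff (cheb_sq K) e = cheb_coeff K (2 * e + K mod 2)"
  unfolding cheb_sq_def by (simp add: coeff_sum)

lemma poly_cheb_sq: "poly (cheb_sq K) (t ^ 2) * t ^ (K mod 2) = poly (cheb K) t"
proof -
  define f where "f m = cheb_coeff K m * t ^ m" for m
  define r where "r i = 2 * i + K mod 2" for i
  have "poly (cheb_sq K) (t ^ 2) * t ^ (K mod 2) = (\<Sum>i\<le>K div 2. f (r i))"
    unfolding cheb_sq_def f_def r_def
    by (simp add: poly_sum poly_monom sum_distrib_right power_add power_mult mult.assoc)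
  also have "\<dots> = sum f (r ` {..K div 2})"
    by (subst sum.reindex) (auto simp: inj_on_def r_def)
  also have "\<dots> = sum f {..K}"
  proof (rule sum.mono_neutral_left)
    show "r ` {..K div 2} \<subseteq> {..K}"
      by (auto simp: r_def) presburger
    show "\<forall>m\<in>{..K} - r ` {..K div 2}. f m = 0"
    proof
      fix m assume m: "m \<in> {..K} - r ` {..K div 2}"
      have "odd (K + m)"
      proof
        assume "even (K + m)"
        then have "m = r (m div 2)" "m div 2 \<le> K div 2"
          using m by (auto simp: r_def div_le_mono) presburger
        then show False
          using m by blast
      qed
      then show "f m = 0"
        by (simp add: f_def cheb_coeff_def coeff_cheb_eq_0)
    qed
  qed simp
  also have "\<dots> = poly (cheb K) t"
    by (simp add: f_def poly_cheb_eq_sum)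
  finally show ?thesis .
qed

(* Interpolating in the variable t^2 makes the nodes nonnegative, which gives the coefficients of the
   Lagrange basis a checkerboard sign pattern (cheb_weight_sign). *)
definition cheb_weight :: "nat \<Rightarrow> nat \<Rightarrow> nat \<Rightarrow> real" where
  "cheb_weight K d j =
    coeff (lagrange_basis (K div 2) (\<lambda>i. cheb_node K i ^ 2) j) (d div 2) / cheb_node K j ^ (K mod 2)"

lemma cheb_node_power_parity_pos:
  assumes "j \<le> K div 2"
  shows "cheb_node K j ^ (K mod 2) > 0"
proof (cases "even K")
  case False
  then have "K mod 2 = 1" "2 * j < K"
    using assms by presburger+
  then show ?thesis
    using cheb_node_pos by simp
qed simp

lemma sum_alternating_cheb_weight:
  assumes "d \<le> K" "even (K - d)"
  shows "(\<Sum>j\<le>K div 2. (-1) ^ j * cheb_weight K d j) = cheb_coeff K d"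
proof -
  interpret descending_nodes "K div 2" "\<lambda>j. cheb_node K j ^ 2"
    by (rule descending_nodes_cheb_node_sq)
  have "poly (cheb_sq K) (cheb_node K j ^ 2) = (-1) ^ j / cheb_node K j ^ (K mod 2)"
    if "j \<le> K div 2" for j
    using poly_cheb_sq[of K "cheb_node K j"] poly_cheb_node[of j K] cheb_node_power_parity_pos[OF that] that
    by (auto simp: eq_divide_eq)
  then have "(\<Sum>j\<le>K div 2. (-1) ^ j * cheb_weight K d j) =
    (\<Sum>j\<le>K div 2. poly (cheb_sq K) (cheb_node K j ^ 2) *
        coeff (lagrange_basis (K div 2) (\<lambda>i. cheb_node K i ^ 2) j) (d div 2))"
    by (simp add: cheb_weight_def)
  also have "\<dots> = coeff (cheb_sq K) (d div 2)"
    by (rule coeff_lagrange_interpolation[symmetric]) (rule degree_cheb_sq)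
  also have "\<dots> = cheb_coeff K d"
  proof -
    have "2 * (d div 2) + K mod 2 = d"
      using assms by presburger
    then show ?thesis
      using assms(1) by (simp add: coeff_cheb_sq div_le_mono)
  qed
  finally show ?thesis .
qed

lemma cheb_weight_sign:
  assumes "j \<le> K div 2"
  shows "(-1) ^ (K div 2 + d div 2 + j) * cheb_weight K d j \<ge> 0"
proof -
  have "(-1) ^ (K div 2 + d div 2 + j) *
      coeff (lagrange_basis (K div 2) (\<lambda>i. cheb_node K i ^ 2) j) (d div 2) \<ge> 0"
    by (rule descending_nodes.coeff_lagrange_basis_sign[OF descending_nodes_cheb_node_sq assms])
      simp
  then show ?thesis
    using cheb_node_power_parity_pos[OF assms] by (simp add: cheb_weight_def)
qed

lemma sum_abs_cheb_weight:
  assumes "d \<le> K" "even (K - d)"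
  shows "(\<Sum>j\<le>K div 2. \<bar>cheb_weight K d j\<bar>) = \<bar>cheb_coeff K d\<bar>"
proof -
  define \<sigma> where "\<sigma> = (-1::real) ^ (K div 2 + d div 2)"
  have abs_eq: "\<bar>cheb_weight K d j\<bar> = \<sigma> * ((-1) ^ j * cheb_weight K d j)" if "j \<le> K div 2" for j
  proof -
    have "0 \<le> \<sigma> * ((-1) ^ j * cheb_weight K d j)"
      using cheb_weight_sign[OF that, of d] by (simp add: \<sigma>_def power_add mult.assoc)
    moreover have "\<bar>\<sigma> * ((-1) ^ j * cheb_weight K d j)\<bar> = \<bar>cheb_weight K d j\<bar>"
      by (simp add: \<sigma>_def abs_mult)
    ultimately show ?thesis
      by simp
  qed
  have "(\<Sum>j\<le>K div 2. \<bar>cheb_weight K d j\<bar>) = \<sigma> * (\<Sum>j\<le>K div 2. (-1) ^ j * cheb_weight K d j)"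
    unfolding sum_distrib_left by (rule sum.cong) (simp_all add: abs_eq)
  then have "(\<Sum>j\<le>K div 2. \<bar>cheb_weight K d j\<bar>) = \<sigma> * cheb_coeff K d"
    by (simp add: sum_alternating_cheb_weight[OF assms])
  moreover have "\<bar>\<sigma> * cheb_coeff K d\<bar> = \<bar>cheb_coeff K d\<bar>"
    by (simp add: \<sigma>_def abs_mult)
  ultimately show ?thesis
    by (metis abs_of_nonneg sum_nonneg abs_ge_zero)
qed

lemma sum_cheb_weight_mult_power:
  assumes "d \<le> K" "even (K - d)" "l \<le> K" "even (l + d)"
  shows "(\<Sum>j\<le>K div 2. cheb_weight K d j * cheb_node K j ^ l) = (if l = d then 1 else 0)"
proof -
  interpret descending_nodes "K div 2" "\<lambda>j. cheb_node K j ^ 2"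
    by (rule descending_nodes_cheb_node_sq)
  have l_eq: "l = 2 * (l div 2) + K mod 2" and d_eq: "d = 2 * (d div 2) + K mod 2"
    using assms by presburger+
  have "(\<Sum>j\<le>K div 2. cheb_weight K d j * cheb_node K j ^ l) =
    (\<Sum>j\<le>K div 2. poly (monom 1 (l div 2)) (cheb_node K j ^ 2) *
        coeff (lagrange_basis (K div 2) (\<lambda>i. cheb_node K i ^ 2) j) (d div 2))"
  proof (rule sum.cong)
    fix j assume "j \<in> {..K div 2}"
    then have "cheb_node K j ^ (K mod 2) \<noteq> 0"
      using cheb_node_power_parity_pos by fastforce
    moreover have "cheb_node K j ^ l = cheb_node K j ^ (K mod 2) * (cheb_node K j ^ 2) ^ (l div 2)"
      by (metis l_eq power_add power_mult add.commute)
    ultimately show "cheb_weight K d j * cheb_node K j ^ l =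
      poly (monom 1 (l div 2)) (cheb_node K j ^ 2) *
        coeff (lagrange_basis (K div 2) (\<lambda>i. cheb_node K i ^ 2) j) (d div 2)"
      by (auto simp: cheb_weight_def poly_monom)
  qed simp
  also have "\<dots> = coeff (monom 1 (l div 2)) (d div 2)"
    using assms(3) by (intro coeff_lagrange_interpolation[symmetric] order.trans[OF degree_monom_le])
      (simp add: div_le_mono)
  also have "\<dots> = (if l = d then 1 else 0)"
    using l_eq d_eq by auto
  finally show ?thesis .
qed

lemma sum_bool_times: "(\<Sum>z\<in>(UNIV :: bool set) \<times> A. F z) = (\<Sum>j\<in>A. F (True, j) + F (False, j))"
proof -
  have "(\<Sum>z\<in>(UNIV :: bool set) \<times> A. F z) = (\<Sum>b\<in>UNIV. \<Sum>j\<in>A. F (b, j))"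
    by (simp add: sum.cartesian_product)
  then show ?thesis
    by (simp add: UNIV_bool sum.distrib add.commute)
qed

lemma cheb_signed_measure:
  assumes "d \<le> K" "even (K - d)"
  obtains I :: "(bool \<times> nat) set" and t \<mu> :: "bool \<times> nat \<Rightarrow> real"
  where "finite I" "\<And>z. \<bar>t z\<bar> \<le> 1"
    "\<And>l. l \<le> Suc K \<Longrightarrow> (\<Sum>z\<in>I. \<mu> z * t z ^ l) = (if l = d then 1 else 0)"
    "(\<Sum>z\<in>I. \<bar>\<mu> z\<bar>) = \<bar>cheb_coeff K d\<bar>"
proof
  \<comment> \<open>Mirroring the nodes with weights multiplied by (-1)^d kills the moments with l + d odd.\<close>
  define I where "I = (UNIV :: bool set) \<times> {..K div 2}"
  define t where "t z = (if fst z then 1 else -1) * cheb_node K (snd z)" for z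
  define \<mu> where "\<mu> z = (if fst z then 1 else (-1) ^ d) * cheb_weight K d (snd z) / 2" for z
  show "finite I"
    by (simp add: I_def)
  show "\<bar>t z\<bar> \<le> 1" for z
    by (simp add: t_def cheb_node_def abs_mult)
  show "(\<Sum>z\<in>I. \<mu> z * t z ^ l) = (if l = d then 1 else 0)" if "l \<le> Suc K" for l
  proof -
    have "(\<Sum>z\<in>I. \<mu> z * t z ^ l) =
        (\<Sum>j\<le>K div 2. cheb_weight K d j * cheb_node K j ^ l) * ((1 + (-1) ^ (d + l)) / 2)"
      unfolding I_def sum_bool_times sum_distrib_right
      by (rule sum.cong) (simp_all add: \<mu>_def t_def power_minus' power_add field_simps)
    also have "\<dots> = (if l = d then 1 else 0)"
    proof (cases "even (l + d)")
      case True
      then have "l \<le> K"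
        using that assms by presburger
      then show ?thesis
        using True sum_cheb_weight_mult_power[OF assms] by (simp add: add.commute)
    next
      case False
      then show ?thesis
        by (auto simp: add.commute)
    qed
    finally show ?thesis .
  qed
  show "(\<Sum>z\<in>I. \<bar>\<mu> z\<bar>) = \<bar>cheb_coeff K d\<bar>"
    unfolding I_def sum_bool_times
    by (simp add: \<mu>_def abs_mult sum_abs_cheb_weight[OF assms] flip: sum.distrib)
qed

section \<open>The upper bound\<close>

lemma riesz_product_expansion:
  "(\<Prod>i\<in>{0..<n}. 1 + t * x i) = (\<Sum>S\<in>Pow {0..<n}. t ^ card S * walsh S x)"
proof -
  have "(\<Prod>i\<in>{0..<n}. t * x i + 1) = (\<Sum>S\<in>Pow {0..<n}. (\<Prod>i\<in>S. t * x i) * (\<Prod>i\<in>{0..<n} - S. 1))"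
    by (rule prod_add) simp
  then show ?thesis
    by (simp add: walsh_def prod.distrib add.commute)
qed

lemma riesz_product_nonneg:
  assumes "\<bar>t\<bar> \<le> 1" "x \<in> cube n"
  shows "(\<Prod>i\<in>{0..<n}. 1 + t * x i) \<ge> 0"
  using assms cube_coord[OF assms(2)] by (intro prod_nonneg) (force simp: abs_le_iff)

lemma sum_riesz_product: "(\<Sum>x\<in>cube n. \<Prod>i\<in>{0..<n}. 1 + t * x i) = 2 ^ n"
  using sum_cube_prod[where f = "\<lambda>i a. 1 + t * a"] by (simp add: lessThan_atLeast0)

lemma L1_cube_riesz_mixture_le:
  assumes "finite I" "\<And>z. z \<in> I \<Longrightarrow> \<bar>t z\<bar> \<le> 1"
  shows "L1_cube n (\<lambda>x. \<Sum>z\<in>I. \<mu> z * (\<Prod>i\<in>{0..<n}. 1 + t z * x i)) \<le> (\<Sum>z\<in>I. \<bar>\<mu> z\<bar>)"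
proof -
  have "(\<Sum>x\<in>cube n. \<bar>\<Sum>z\<in>I. \<mu> z * (\<Prod>i\<in>{0..<n}. 1 + t z * x i)\<bar>)
      \<le> (\<Sum>x\<in>cube n. \<Sum>z\<in>I. \<bar>\<mu> z\<bar> * (\<Prod>i\<in>{0..<n}. 1 + t z * x i))"
    using assms(2) riesz_product_nonneg
    by (intro sum_mono order.trans[OF sum_abs] eq_refl sum.cong) (auto simp: abs_mult)
  also have "\<dots> = (\<Sum>z\<in>I. \<bar>\<mu> z\<bar> * (\<Sum>x\<in>cube n. \<Prod>i\<in>{0..<n}. 1 + t z * x i))"
    unfolding sum_distrib_left by (rule sum.swap)
  also have "\<dots> = (\<Sum>z\<in>I. \<bar>\<mu> z\<bar>) * 2 ^ n"
    by (simp add: sum_riesz_product sum_distrib_right)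
  finally show ?thesis
    unfolding L1_cube_def by (simp add: divide_le_eq)
qed

lemma elem_sym_eq_sum_Pow: "elem_sym n d x = (\<Sum>S\<in>Pow {0..<n}. if card S = d then walsh S x else 0)"
proof -
  have "{S. S \<subseteq> {0..<n} \<and> card S = d} = Pow {0..<n} \<inter> {S. card S = d}"
    by auto
  then show ?thesis
    by (simp add: elem_sym_def sum.inter_restrict)
qed

lemma elem_sym_minus_riesz_mixture_high_deg:
  assumes moments: "\<And>l. l \<le> k \<Longrightarrow> (\<Sum>z\<in>I. \<mu> z * t z ^ l) = (if l = d then 1 else 0)"
  shows "(\<lambda>x. elem_sym n d x - (\<Sum>z\<in>I. \<mu> z * (\<Prod>i\<in>{0..<n}. 1 + t z * x i))) \<in> high_deg n k"
proof -
  define c where "c S = (if card S = d then 1 else 0) - (\<Sum>z\<in>I. \<mu> z * t z ^ card S)" for S :: "nat set"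
  have "elem_sym n d x - (\<Sum>z\<in>I. \<mu> z * (\<Prod>i\<in>{0..<n}. 1 + t z * x i)) =
      (\<Sum>S\<in>Pow {0..<n}. c S * walsh S x)" for x
  proof -
    have "(\<Sum>z\<in>I. \<mu> z * (\<Prod>i\<in>{0..<n}. 1 + t z * x i)) =
        (\<Sum>S\<in>Pow {0..<n}. (\<Sum>z\<in>I. \<mu> z * t z ^ card S) * walsh S x)"
      unfolding riesz_product_expansion sum_distrib_left sum_distrib_right
      by (subst sum.swap) (simp add: mult.assoc)
    then show ?thesis
      unfolding elem_sym_eq_sum_Pow
      by (auto simp: c_def left_diff_distrib intro!: sum.cong simp flip: sum_subtractf)
  qed
  moreover have "c S = 0" if "card S \<le> k" for S
    using moments[OF that] by (simp add: c_def)
  ultimately show ?thesis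
    unfolding high_deg_def by blast
qed

lemma INF_L1_dist_le:
  "g \<in> high_deg n k \<Longrightarrow>
    (INF h\<in>high_deg n k. L1_cube n (\<lambda>x. f x - h x)) \<le> L1_cube n (\<lambda>x. f x - g x)"
  by (rule cINF_lower) (auto intro: bdd_belowI[where m = 0] simp: L1_cube_nonneg)

lemma INF_L1_dist_le_abs_cheb_coeff:
  assumes "d \<le> K" "even (K - d)" "k \<le> Suc K"
  shows "(INF g\<in>high_deg n k. L1_cube n (\<lambda>x. elem_sym n d x - g x)) \<le> \<bar>cheb_coeff K d\<bar>"
proof -
  obtain I :: "(bool \<times> nat) set" and t \<mu> where I: "finite I" "\<And>z. \<bar>t z\<bar> \<le> 1"
    "\<And>l. l \<le> Suc K \<Longrightarrow> (\<Sum>z\<in>I. \<mu> z * t z ^ l) = (if l = d then 1 else 0)"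
    "(\<Sum>z\<in>I. \<bar>\<mu> z\<bar>) = \<bar>cheb_coeff K d\<bar>"
    using cheb_signed_measure[OF assms(1,2)] by blast
  define g where "g x = elem_sym n d x - (\<Sum>z\<in>I. \<mu> z * (\<Prod>i\<in>{0..<n}. 1 + t z * x i))" for x
  have "g \<in> high_deg n k"
    unfolding g_def using assms(3) I(3) by (intro elem_sym_minus_riesz_mixture_high_deg) simp
  then have "(INF g\<in>high_deg n k. L1_cube n (\<lambda>x. elem_sym n d x - g x)) \<le>
      L1_cube n (\<lambda>x. \<Sum>z\<in>I. \<mu> z * (\<Prod>i\<in>{0..<n}. 1 + t z * x i))"
    using INF_L1_dist_le[of g n k "elem_sym n d"] by (simp add: g_def)
  also have "\<dots> \<le> \<bar>cheb_coeff K d\<bar>"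
    using L1_cube_riesz_mixture_le[of I t n \<mu>] I by simp
  finally show ?thesis .
qed

lemma cheb_coeff_tilde_eq_cheb_coeff:
  assumes "d \<le> k"
  obtains K where "d \<le> K" "even (K - d)" "K \<le> k" "k \<le> Suc K"
    "cheb_coeff_tilde k d = cheb_coeff K d"
proof
  define K where "K = (if even (k - d) then k else k - 1)"
  show "d \<le> K" "even (K - d)" "K \<le> k" "k \<le> Suc K"
    using assms unfolding K_def by presburger+
  show "cheb_coeff_tilde k d = cheb_coeff K d"
    by (simp add: K_def cheb_coeff_tilde_def)
qed

theorem corollary1p5:
  fixes k d :: nat
  assumes "d \<le> k"
  shows "\<exists>\<epsilon> :: nat \<Rightarrow> real.
    (\<forall>n\<ge>k. \<epsilon> n > 0 \<and>
       \<bar>cheb_coeff_tilde k d\<bar> - \<epsilon> n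
         \<le> (INF g\<in>high_deg n k. L1_cube n (\<lambda>x. elem_sym n d x - g x)) \<and>
       (INF g\<in>high_deg n k. L1_cube n (\<lambda>x. elem_sym n d x - g x)) \<le> \<bar>cheb_coeff_tilde k d\<bar>)
    \<and> \<epsilon> \<longlonglongrightarrow> 0"
proof -
  obtain K where K: "d \<le> K" "even (K - d)" "K \<le> k" "k \<le> Suc K"
    and tilde: "cheb_coeff_tilde k d = cheb_coeff K d"
    using cheb_coeff_tilde_eq_cheb_coeff[OF assms] by blast
  define \<epsilon> where "\<epsilon> n = \<bar>cheb_coeff K d\<bar> - \<bar>cheb_mean_corr n K d\<bar> + inverse (real (Suc n))" for n
  have "\<epsilon> \<longlonglongrightarrow> \<bar>cheb_coeff K d\<bar> - \<bar>cheb_coeff K d\<bar> + 0"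
    unfolding \<epsilon>_def by (intro tendsto_intros cheb_mean_corr_tendsto K(1) LIMSEQ_inverse_real_of_nat)
  moreover have "\<epsilon> n > 0 \<and>
      \<bar>cheb_coeff K d\<bar> - \<epsilon> n \<le> (INF g\<in>high_deg n k. L1_cube n (\<lambda>x. elem_sym n d x - g x)) \<and>
      (INF g\<in>high_deg n k. L1_cube n (\<lambda>x. elem_sym n d x - g x)) \<le> \<bar>cheb_coeff K d\<bar>" for n
  proof -
    have "inverse (real (Suc n)) > 0"
      by simp
    then show ?thesis
      using abs_cheb_mean_corr_le_INF_L1_dist[OF K(3), of n d]
        INF_L1_dist_le_abs_cheb_coeff[OF K(1,2,4), of n]
      unfolding \<epsilon>_def by linarith
  qed
  ultimately show ?thesis
    unfolding tilde by auto
qed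

end
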